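(* Let $(L,\vee,\wedge,0,1)$ be a complemented modular lattice with $0\ne1$ and $a,b\in L$. Then: (i) $\{a\}\wedge(a\to b)=\{a\wedge b\}$ (and $a\wedge b\le b$); (ii) if $a^+\le b^+$ then $(a\to b)\wedge b^+=a^+$; (iii) if $c\in a\to b$ then $a\to c=a\to b$; (iv) $a\to(a\to b)=a\to b$; (v) if $a^+\le \{b\}$ then $a\to b=\{b\}$.
   Context: For $a\in L$, $a^+:=\{x\in L\mid a\vee x=1,\ a\wedge x=0\}$ (the set of all complements of $a$). For $A,B\subseteq L$: $A\vee B:=\{x\vee y\mid x\in A,y\in B\}$, $A\wedge B:=\{x\wedge y\mid x\in A,y\in B\}$, and $A\le B$ means $x\le y$ for all $x\in A$ and all $y\in B$. For $a,b\in L$, $a\to b:=a^+\vee\{a\wedge b\}$, and for $A\subseteq L$, $a\to A:=\{a\}^+\vee(\{a\}\wedge A)=\{x\vee(a\wedge y)\mid x\in a^+,y\in A\}$. *)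

theory Defs
  imports Main
begin

class cm_lattice = bounded_lattice +
  assumes modular: "x \<le> z \<Longrightarrow> sup x (inf y z) = inf (sup x y) z"
  assumes complemented: "\<exists>y. sup x y = top \<and> inf x y = bot"
  assumes bot_neq_top: "bot \<noteq> top"

definition compls :: "'a::bounded_lattice \<Rightarrow> 'a set" where
  "compls a = {x. sup a x = top \<and> inf a x = bot}"

definition set_sup :: "'a::lattice set \<Rightarrow> 'a set \<Rightarrow> 'a set" where
  "set_sup A B = {sup x y | x y. x \<in> A \<and> y \<in> B}"

definition set_inf :: "'a::lattice set \<Rightarrow> 'a set \<Rightarrow> 'a set" where
  "set_inf A B = {inf x y | x y. x \<in> A \<and> y \<in> B}"

definition set_le :: "'a::order set \<Rightarrow> 'a set \<Rightarrow> bool" where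
  "set_le A B \<longleftrightarrow> (\<forall>x\<in>A. \<forall>y\<in>B. x \<le> y)"

definition imp :: "'a::bounded_lattice \<Rightarrow> 'a \<Rightarrow> 'a set" where
  "imp a b = set_sup (compls a) {inf a b}"

definition imp_set :: "'a::bounded_lattice \<Rightarrow> 'a set \<Rightarrow> 'a set" where
  "imp_set a A = set_sup (compls a) (set_inf {a} A)"

end

theory Submission
  imports Defs
begin

text \<open>Every element of \<open>a \<rightarrow> b\<close> has the form \<open>x \<squnion> (a \<sqinter> b)\<close> with \<open>x\<close> a complement
  of \<open>a\<close>, and the modular law collapses \<open>a \<sqinter> (x \<squnion> (a \<sqinter> b))\<close> to \<open>(a \<sqinter> b) \<squnion> (a \<sqinter> x) = a \<sqinter> b\<close>.
  This gives (i); since \<open>a \<rightarrow> c\<close> depends on \<open>c\<close> only through \<open>a \<sqinter> c\<close>, (iii) and (iv)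
  follow. For (ii) and (v) the modular law is applied with \<open>x \<le> y\<close> for a complement
  \<open>y\<close> of \<open>b\<close>, resp. with \<open>x \<le> b\<close>.\<close>

lemma set_inf_singleton_left: "set_inf {a} A = inf a ` A"
  by (auto simp: set_inf_def)

lemma set_sup_singleton_right: "set_sup A {c} = (\<lambda>x. sup x c) ` A"
  by (auto simp: set_sup_def)

lemma imp_eq_image: "imp a b = (\<lambda>x. sup x (inf a b)) ` compls a"
  by (simp add: imp_def set_sup_singleton_right)

lemma imp_cong_inf: "inf a c = inf a b \<Longrightarrow> imp a c = imp a b"
  by (simp add: imp_def)

lemma compls_nonempty: "compls (a::'a::cm_lattice) \<noteq> {}"
  using complemented[of a] by (auto simp: compls_def)

lemma inf_sup_inf_absorb:
  fixes a b x :: "'a::cm_lattice"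
  assumes "inf a x = bot"
  shows "inf a (sup x (inf a b)) = inf a b"
proof -
  have "sup (inf a b) (inf x a) = inf (sup (inf a b) x) a"
    by (rule modular) simp
  with assms show ?thesis
    by (simp add: sup_commute inf_commute)
qed

lemma inf_imp: "inf a ` imp a b = {inf (a::'a::cm_lattice) b}"
proof -
  have "inf a (sup x (inf a b)) = inf a b" if "x \<in> compls a" for x
    using that by (intro inf_sup_inf_absorb) (simp add: compls_def)
  with compls_nonempty[of a] show ?thesis
    by (auto simp: imp_eq_image image_image)
qed

lemma imp_eq_of_mem_imp:
  fixes a b c :: "'a::cm_lattice"
  assumes "c \<in> imp a b"
  shows "imp a c = imp a b"
  using assms inf_imp[of a b] by (intro imp_cong_inf) blast

lemma imp_set_imp: "imp_set a (imp a b) = imp (a::'a::cm_lattice) b"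
  unfolding imp_set_def set_inf_singleton_left inf_imp by (simp add: imp_def)

lemma inf_sup_inf_eq_of_le:
  fixes a b x y :: "'a::cm_lattice"
  assumes "x \<le> y" and "inf b y = bot"
  shows "inf (sup x (inf a b)) y = x"
proof -
  have "inf (inf a b) y = bot"
    using assms(2) by (metis inf.assoc inf_bot_right)
  with modular[OF assms(1), of "inf a b"] show ?thesis
    by simp
qed

lemma imp_inf_compls:
  fixes a b :: "'a::cm_lattice"
  assumes "set_le (compls a) (compls b)"
  shows "set_inf (imp a b) (compls b) = compls a"
proof -
  have collapse: "inf (sup x (inf a b)) y = x" if "x \<in> compls a" "y \<in> compls b" for x y
    using assms that by (intro inf_sup_inf_eq_of_le) (auto simp: set_le_def compls_def)
  obtain y where y: "y \<in> compls b"
    using compls_nonempty by blast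
  show ?thesis
  proof (rule set_eqI, rule iffI)
    fix z assume "z \<in> set_inf (imp a b) (compls b)"
    then show "z \<in> compls a"
      unfolding set_inf_def imp_eq_image using collapse by auto
  next
    fix x assume x: "x \<in> compls a"
    have "x = inf (sup x (inf a b)) y"
      using collapse[OF x y] by simp
    with x y show "x \<in> set_inf (imp a b) (compls b)"
      unfolding set_inf_def imp_eq_image by blast
  qed
qed

lemma sup_inf_eq_of_le:
  fixes a b x :: "'a::cm_lattice"
  assumes "x \<le> b" and "sup x a = top"
  shows "sup x (inf a b) = b"
  using modular[OF assms(1), of a] assms(2) by simp

lemma imp_eq_singleton:
  fixes a b :: "'a::cm_lattice"
  assumes "set_le (compls a) {b}"
  shows "imp a b = {b}"
proof -
  have "sup x (inf a b) = b" if "x \<in> compls a" for x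
    using assms that by (intro sup_inf_eq_of_le) (auto simp: set_le_def compls_def sup_commute)
  with compls_nonempty[of a] show ?thesis
    by (auto simp: imp_eq_image)
qed

theorem theorem4:
  fixes a b :: "'a::cm_lattice"
  shows "(set_inf {a} (imp a b) = {inf a b} \<and> inf a b \<le> b)
    \<and> (set_le (compls a) (compls b) \<longrightarrow> set_inf (imp a b) (compls b) = compls a)
    \<and> (\<forall>c. c \<in> imp a b \<longrightarrow> imp a c = imp a b)
    \<and> imp_set a (imp a b) = imp a b
    \<and> (set_le (compls a) {b} \<longrightarrow> imp a b = {b})"
  by (simp add: set_inf_singleton_left inf_imp imp_inf_compls imp_eq_of_mem_imp
      imp_set_imp imp_eq_singleton)

end
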